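(* Let $\mathcal{E}$ be an equivalence class of words under $\sim$. Then (i) all words in $\mathcal{E}$ have the same length, and (ii) $\mathcal{E}$ is finite.
   Context: $\mathcal{A}$ is the free associative $\mathbb{C}$-algebra on noncommuting generators $L,R$; words are finite products of these letters. A word is balanced if it contains equally many $L$'s and $R$'s. $\mathcal{J}$ is the two-sided ideal generated by $\{FG-GF : F,G \text{ nonempty balanced words}\}$, and for words $X,Y$, $X\sim Y$ means $X-Y\in\mathcal{J}$. *)

theory Defs
  imports Complex_Main "HOL-Library.Poly_Mapping"
begin

datatype letter = L | R

type_synonym word = "letter list"

definition balanced :: "word \<Rightarrow> bool" where
  "balanced w \<longleftrightarrow> length (filter (\<lambda>c. c = L) w) = length (filter (\<lambda>c. c = R) w)"

text \<open>The free associative C-algebra on L, R: finitely supported C-valued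
  functions on words (a word X is the basis element mono X), with the
  concatenation (convolution) product.\<close>
type_synonym falg = "word \<Rightarrow>\<^sub>0 complex"

definition mono :: "word \<Rightarrow> falg" where
  "mono w = Poly_Mapping.single w 1"

definition fmult :: "falg \<Rightarrow> falg \<Rightarrow> falg" where
  "fmult p q = (\<Sum>u\<in>Poly_Mapping.keys p. \<Sum>v\<in>Poly_Mapping.keys q.
      Poly_Mapping.single (u @ v) (Poly_Mapping.lookup p u * Poly_Mapping.lookup q v))"

inductive_set Jideal :: "falg set" where
  gen: "\<lbrakk>balanced F; balanced G; F \<noteq> []; G \<noteq> []\<rbrakk>
        \<Longrightarrow> mono (F @ G) - mono (G @ F) \<in> Jideal"
| zero: "0 \<in> Jideal"
| add: "\<lbrakk>a \<in> Jideal; b \<in> Jideal\<rbrakk> \<Longrightarrow> a + b \<in> Jideal"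
| lmult: "a \<in> Jideal \<Longrightarrow> fmult x a \<in> Jideal"
| rmult: "a \<in> Jideal \<Longrightarrow> fmult a x \<in> Jideal"

definition wsim :: "word \<Rightarrow> word \<Rightarrow> bool" where
  "wsim X Y \<longleftrightarrow> mono X - mono Y \<in> Jideal"

end

theory Submission
  imports Defs
begin

text \<open>Substituting commuting scalars for the letters L and R is an algebra homomorphism from
  the free algebra to the complex numbers. Its kernel contains every commutator, hence the
  ideal J. Substituting 2 for both letters maps a word X to 2 ^ length X, so equivalent words
  have equal length; and there are only finitely many words of a given length.\<close>

definition eval_falg :: "(letter \<Rightarrow> complex) \<Rightarrow> falg \<Rightarrow> complex" where
  "eval_falg \<sigma> p = (\<Sum>u\<in>Poly_Mapping.keys p. Poly_Mapping.lookup p u * prod_list (map \<sigma> u))"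

lemma eval_falg_superset:
  assumes "finite S" "Poly_Mapping.keys p \<subseteq> S"
  shows "eval_falg \<sigma> p = (\<Sum>u\<in>S. Poly_Mapping.lookup p u * prod_list (map \<sigma> u))"
  unfolding eval_falg_def
  by (rule sum.mono_neutral_left) (use assms in \<open>auto simp: in_keys_iff\<close>)

lemma eval_falg_zero: "eval_falg \<sigma> 0 = 0"
  by (simp add: eval_falg_def)

lemma eval_falg_add: "eval_falg \<sigma> (p + q) = eval_falg \<sigma> p + eval_falg \<sigma> q"
proof -
  let ?S = "Poly_Mapping.keys p \<union> Poly_Mapping.keys q"
  have "eval_falg \<sigma> (p + q) = (\<Sum>u\<in>?S. Poly_Mapping.lookup (p + q) u * prod_list (map \<sigma> u))"
    by (rule eval_falg_superset) (simp_all add: keys_add)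
  also have "\<dots> = (\<Sum>u\<in>?S. Poly_Mapping.lookup p u * prod_list (map \<sigma> u))
                 + (\<Sum>u\<in>?S. Poly_Mapping.lookup q u * prod_list (map \<sigma> u))"
    by (simp add: lookup_add distrib_right sum.distrib)
  also have "\<dots> = eval_falg \<sigma> p + eval_falg \<sigma> q"
    using eval_falg_superset[of ?S p \<sigma>] eval_falg_superset[of ?S q \<sigma>] by simp
  finally show ?thesis .
qed

lemma eval_falg_diff: "eval_falg \<sigma> (p - q) = eval_falg \<sigma> p - eval_falg \<sigma> q"
  using eval_falg_add[of \<sigma> "p - q" q] by simp

lemma eval_falg_sum: "eval_falg \<sigma> (\<Sum>i\<in>I. f i) = (\<Sum>i\<in>I. eval_falg \<sigma> (f i))"
  by (induction I rule: infinite_finite_induct) (simp_all add: eval_falg_zero eval_falg_add)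

lemma eval_falg_single:
  "eval_falg \<sigma> (Poly_Mapping.single w c) = c * prod_list (map \<sigma> w)"
  by (cases "c = 0") (simp_all add: eval_falg_def)

lemma eval_falg_mono: "eval_falg \<sigma> (mono w) = prod_list (map \<sigma> w)"
  by (simp add: mono_def eval_falg_single)

lemma eval_falg_fmult: "eval_falg \<sigma> (fmult p q) = eval_falg \<sigma> p * eval_falg \<sigma> q"
proof -
  have "eval_falg \<sigma> (fmult p q) = (\<Sum>u\<in>Poly_Mapping.keys p. \<Sum>v\<in>Poly_Mapping.keys q.
      Poly_Mapping.lookup p u * Poly_Mapping.lookup q v * prod_list (map \<sigma> (u @ v)))"
    unfolding fmult_def by (simp only: eval_falg_sum eval_falg_single)
  also have "\<dots> = (\<Sum>u\<in>Poly_Mapping.keys p. \<Sum>v\<in>Poly_Mapping.keys q.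
      (Poly_Mapping.lookup p u * prod_list (map \<sigma> u)) * (Poly_Mapping.lookup q v * prod_list (map \<sigma> v)))"
    by (simp add: ac_simps)
  also have "\<dots> = eval_falg \<sigma> p * eval_falg \<sigma> q"
    unfolding eval_falg_def by (simp only: sum_product)
  finally show ?thesis .
qed

lemma eval_falg_Jideal: "a \<in> Jideal \<Longrightarrow> eval_falg \<sigma> a = 0"
  by (induction rule: Jideal.induct)
     (simp_all add: eval_falg_diff eval_falg_mono eval_falg_zero eval_falg_add eval_falg_fmult
        mult.commute)

lemma wsim_length_eq:
  assumes "wsim X Y"
  shows "length Y = length X"
proof -
  have "eval_falg (\<lambda>_. 2) (mono X - mono Y) = 0"
    using assms unfolding wsim_def by (rule eval_falg_Jideal)
  then have "(2::complex) ^ length X = 2 ^ length Y"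
    by (simp add: eval_falg_diff eval_falg_mono map_replicate_const)
  then have "(2::real) ^ length X = 2 ^ length Y"
    by (metis norm_numeral norm_power)
  then show ?thesis
    by simp
qed

lemma finite_words_length_eq: "finite {Y :: word. length Y = n}"
proof -
  have "(UNIV :: letter set) = {L, R}"
    using letter.exhaust by auto
  then have "finite (UNIV :: letter set)"
    by (metis finite.emptyI finite_insert)
  then show ?thesis
    using finite_lists_length_eq by fastforce
qed

theorem corollary3p3:
  fixes X :: word and E :: "word set"
  assumes "E = {Y. wsim X Y}"
  shows "(\<forall>Y\<in>E. \<forall>Z\<in>E. length Y = length Z) \<and> finite E"
proof
  show "\<forall>Y\<in>E. \<forall>Z\<in>E. length Y = length Z"
    using assms wsim_length_eq by auto
  have "E \<subseteq> {Y. length Y = length X}"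
    using assms wsim_length_eq by auto
  then show "finite E"
    using finite_words_length_eq finite_subset by blast
qed

end
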